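(* Let $G$ be a finite simple connected graph with no $K_5$ minor, not isomorphic to $C_5$, that has no dynamic $4$-coloring, and suppose $G$ has the minimum number of edges among all such graphs (i.e., every finite simple connected graph with no $K_5$ minor, not isomorphic to $C_5$, and with fewer edges than $G$ is dynamically $4$-colorable). Then $G$ is $2$-connected.
   Context: All graphs are finite and simple. Given a proper vertex coloring of a graph, a vertex $v$ is happy if either $v$ has at most one neighbor or $v$ has two neighbors receiving distinct colors. A dynamic $4$-coloring is a proper vertex coloring with at most $4$ colors in which every vertex is happy. *)

theory Defs
  imports Main
begin

definition simple_graph :: "'a set \<Rightarrow> 'a set set \<Rightarrow> bool" where
  "simple_graph V E \<longleftrightarrow> finite V \<and>
     (\<forall>e\<in>E. \<exists>u v. e = {u, v} \<and> u \<in> V \<and> v \<in> V \<and> u \<noteq> v)"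

definition neighbors :: "'a set set \<Rightarrow> 'a \<Rightarrow> 'a set" where
  "neighbors E v = {u. {u, v} \<in> E}"

definition connected_in :: "'a set set \<Rightarrow> 'a set \<Rightarrow> bool" where
  "connected_in E S \<longleftrightarrow> S \<noteq> {} \<and>
     (\<forall>u\<in>S. \<forall>v\<in>S. (\<lambda>x y. x \<in> S \<and> y \<in> S \<and> {x, y} \<in> E)\<^sup>*\<^sup>* u v)"

definition connected_graph :: "'a set \<Rightarrow> 'a set set \<Rightarrow> bool" where
  "connected_graph V E \<longleftrightarrow> connected_in E V"

definition del_vertex :: "'a set \<Rightarrow> 'a set set \<Rightarrow> 'a \<Rightarrow> 'a set \<times> 'a set set" where
  "del_vertex V E x = (V - {x}, {e \<in> E. x \<notin> e})"

definition two_connected :: "'a set \<Rightarrow> 'a set set \<Rightarrow> bool" where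
  "two_connected V E \<longleftrightarrow> card V > 2 \<and> connected_graph V E \<and>
     (\<forall>x\<in>V. connected_graph (fst (del_vertex V E x)) (snd (del_vertex V E x)))"

definition is_minor :: "'b set \<Rightarrow> 'b set set \<Rightarrow> 'a set \<Rightarrow> 'a set set \<Rightarrow> bool" where
  "is_minor W F V E \<longleftrightarrow> (\<exists>B :: 'b \<Rightarrow> 'a set.
     (\<forall>w\<in>W. B w \<subseteq> V \<and> connected_in E (B w)) \<and>
     (\<forall>w\<in>W. \<forall>w'\<in>W. w \<noteq> w' \<longrightarrow> B w \<inter> B w' = {}) \<and>
     (\<forall>w\<in>W. \<forall>w'\<in>W. {w, w'} \<in> F \<longrightarrow> (\<exists>u\<in>B w. \<exists>v\<in>B w'. {u, v} \<in> E)))"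

definition K5_verts :: "nat set" where "K5_verts = {0..<5}"
definition K5_edges :: "nat set set" where
  "K5_edges = {{i, j} | i j. i < 5 \<and> j < 5 \<and> i \<noteq> j}"

definition C5_verts :: "nat set" where "C5_verts = {0..<5}"
definition C5_edges :: "nat set set" where
  "C5_edges = {{i, (i + 1) mod 5} | i. i < 5}"

definition has_K5_minor :: "'a set \<Rightarrow> 'a set set \<Rightarrow> bool" where
  "has_K5_minor V E \<longleftrightarrow> is_minor K5_verts K5_edges V E"

definition graph_iso :: "'a set \<Rightarrow> 'a set set \<Rightarrow> 'b set \<Rightarrow> 'b set set \<Rightarrow> bool" where
  "graph_iso V E W F \<longleftrightarrow> (\<exists>f. bij_betw f V W \<and>
     (\<forall>u\<in>V. \<forall>v\<in>V. {u, v} \<in> E \<longleftrightarrow> {f u, f v} \<in> F))"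

definition iso_C5 :: "'a set \<Rightarrow> 'a set set \<Rightarrow> bool" where
  "iso_C5 V E \<longleftrightarrow> graph_iso V E C5_verts C5_edges"

definition dynamic_4_coloring :: "'a set \<Rightarrow> 'a set set \<Rightarrow> ('a \<Rightarrow> nat) \<Rightarrow> bool" where
  "dynamic_4_coloring V E c \<longleftrightarrow>
     (\<forall>v\<in>V. c v < 4) \<and>
     (\<forall>u\<in>V. \<forall>v\<in>V. {u, v} \<in> E \<longrightarrow> c u \<noteq> c v) \<and>
     (\<forall>v\<in>V. card (neighbors E v) \<le> 1 \<or>
        (\<exists>u\<in>neighbors E v. \<exists>w\<in>neighbors E v. c u \<noteq> c w))"

definition dyn4_colorable :: "'a set \<Rightarrow> 'a set set \<Rightarrow> bool" where
  "dyn4_colorable V E \<longleftrightarrow> (\<exists>c. dynamic_4_coloring V E c)"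

end

theory Submission
  imports Defs "HOL-Combinatorics.Transposition"
begin

text \<open>Suppose \<open>x\<close> is a cut vertex and split \<open>V - {x}\<close> into two nonempty sides \<open>C\<close> and \<open>D\<close>
  with no edges between them. Each side together with \<open>x\<close> induces a connected \<open>K\<^sub>5\<close>-minor-free
  graph with fewer edges, since an edge from \<open>x\<close> to the other side is missing. By minimality it
  is dynamically 4-colourable, unless it is a 5-cycle, which still has a proper 4-colouring
  in which every vertex except \<open>x\<close> is happy. Permuting the colours on the \<open>D\<close>-side so that \<open>x\<close>
  gets the same colour on both sides and a neighbour \<open>b \<in> D\<close> of \<open>x\<close> gets a colour different
  from a neighbour \<open>a \<in> C\<close> of \<open>x\<close> glues the two colourings: \<open>x\<close> is happy through \<open>a\<close> and
  \<open>b\<close>, and every other vertex has its whole neighbourhood on its own side. Graphs with at most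
  two vertices are trivially colourable, so \<open>G\<close> must be 2-connected.\<close>


lemma rtranclp_map:
  assumes "R\<^sup>*\<^sup>* a b" and "\<And>x y. R x y \<Longrightarrow> Q (f x) (f y)"
  shows "Q\<^sup>*\<^sup>* (f a) (f b)"
  using assms(1) by (induction rule: rtranclp_induct) (auto intro: rtranclp.rtrancl_into_rtrancl assms(2))

lemma simple_graph_edgeD:
  assumes "simple_graph V E" and "{a, b} \<in> E"
  shows "a \<noteq> b" and "a \<in> V" and "b \<in> V"
proof -
  obtain u v where "{a, b} = {u, v}" "u \<in> V" "v \<in> V" "u \<noteq> v"
    using assms unfolding simple_graph_def by blast
  then show "a \<noteq> b" "a \<in> V" "b \<in> V" by (auto simp: doubleton_eq_iff)
qed

lemma simple_graph_edge_subset: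
  assumes "simple_graph V E" and "e \<in> E"
  shows "e \<subseteq> V"
proof -
  obtain u v where "e = {u, v}" "u \<in> V" "v \<in> V"
    using assms unfolding simple_graph_def by blast
  then show ?thesis by simp
qed

lemma simple_graph_finite_edges:
  assumes "simple_graph V E"
  shows "finite E"
proof (rule finite_subset)
  show "E \<subseteq> Pow V" using simple_graph_edge_subset[OF assms] by blast
  show "finite (Pow V)" using assms unfolding simple_graph_def by simp
qed

lemma neighbors_subset:
  assumes "simple_graph V E"
  shows "neighbors E v \<subseteq> V"
  unfolding neighbors_def using simple_graph_edgeD(2)[OF assms] by blast

lemma graph_iso_trans:
  assumes "graph_iso U D V E" and "graph_iso V E W F"
  shows "graph_iso U D W F"
proof -
  obtain f where f: "bij_betw f U V" "\<forall>u\<in>U. \<forall>v\<in>U. {u, v} \<in> D \<longleftrightarrow> {f u, f v} \<in> E"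
    using assms(1) unfolding graph_iso_def by blast
  obtain g where g: "bij_betw g V W" "\<forall>u\<in>V. \<forall>v\<in>V. {u, v} \<in> E \<longleftrightarrow> {g u, g v} \<in> F"
    using assms(2) unfolding graph_iso_def by blast
  have "bij_betw (g \<circ> f) U W" using f(1) g(1) by (rule bij_betw_trans)
  moreover have "{u, v} \<in> D \<longleftrightarrow> {(g \<circ> f) u, (g \<circ> f) v} \<in> F" if "u \<in> U" "v \<in> U" for u v
    using f(2) g(2) bij_betw_apply[OF f(1)] that by simp
  ultimately show ?thesis unfolding graph_iso_def by blast
qed

lemma connected_graph_iso:
  assumes "graph_iso V E W F" and "connected_graph V E"
  shows "connected_graph W F"
proof -
  obtain f where f: "bij_betw f V W" "\<forall>u\<in>V. \<forall>v\<in>V. {u, v} \<in> E \<longleftrightarrow> {f u, f v} \<in> F"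
    using assms(1) unfolding graph_iso_def by blast
  have W: "W = f ` V" using f(1) unfolding bij_betw_def by simp
  show ?thesis
    unfolding connected_graph_def connected_in_def
  proof (intro conjI ballI)
    show "W \<noteq> {}" using assms(2) W unfolding connected_graph_def connected_in_def by simp
    fix a' b' assume "a' \<in> W" "b' \<in> W"
    then obtain a b where ab: "a \<in> V" "b \<in> V" "a' = f a" "b' = f b" using W by blast
    have "(\<lambda>x y. x \<in> V \<and> y \<in> V \<and> {x, y} \<in> E)\<^sup>*\<^sup>* a b"
      using assms(2) ab unfolding connected_graph_def connected_in_def by blast
    then show "(\<lambda>x y. x \<in> W \<and> y \<in> W \<and> {x, y} \<in> F)\<^sup>*\<^sup>* a' b'"
      unfolding ab by (rule rtranclp_map) (use f(2) W in blast)
  qed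
qed

lemma is_minor_embedding:
  assumes "is_minor U D V' E'" and "inj_on h V'" and "h ` V' \<subseteq> V"
    and "\<And>x y. x \<in> V' \<Longrightarrow> y \<in> V' \<Longrightarrow> {x, y} \<in> E' \<Longrightarrow> {h x, h y} \<in> E"
  shows "is_minor U D V E"
proof -
  obtain B where B1: "\<forall>w\<in>U. B w \<subseteq> V' \<and> connected_in E' (B w)"
    and B2: "\<forall>w\<in>U. \<forall>w'\<in>U. w \<noteq> w' \<longrightarrow> B w \<inter> B w' = {}"
    and B3: "\<forall>w\<in>U. \<forall>w'\<in>U. {w, w'} \<in> D \<longrightarrow> (\<exists>u\<in>B w. \<exists>v\<in>B w'. {u, v} \<in> E')"
    using assms(1) unfolding is_minor_def by blast
  show ?thesis unfolding is_minor_def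
  proof (intro exI[of _ "\<lambda>w. h ` B w"] conjI ballI impI)
    fix w assume w: "w \<in> U"
    show "h ` B w \<subseteq> V" using B1 w assms(3) by blast
    show "connected_in E (h ` B w)"
      unfolding connected_in_def
    proof (intro conjI ballI)
      show "h ` B w \<noteq> {}" using B1 w unfolding connected_in_def by auto
      fix a b assume "a \<in> h ` B w" "b \<in> h ` B w"
      then obtain a' b' where ab: "a' \<in> B w" "b' \<in> B w" "a = h a'" "b = h b'" by blast
      have "(\<lambda>x y. x \<in> B w \<and> y \<in> B w \<and> {x, y} \<in> E')\<^sup>*\<^sup>* a' b'"
        using B1 w ab unfolding connected_in_def by blast
      then show "(\<lambda>x y. x \<in> h ` B w \<and> y \<in> h ` B w \<and> {x, y} \<in> E)\<^sup>*\<^sup>* a b"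
        unfolding ab by (rule rtranclp_map) (use B1 w assms(4) in blast)
    qed
  next
    fix w w' assume w: "w \<in> U" "w' \<in> U" "w \<noteq> w'"
    then have "B w \<inter> B w' = {}" "B w \<subseteq> V'" "B w' \<subseteq> V'" using B1 B2 by auto
    then show "h ` B w \<inter> h ` B w' = {}"
      using assms(2) by (metis image_empty inj_on_image_Int)
  next
    fix w w' assume w: "w \<in> U" "w' \<in> U" "{w, w'} \<in> D"
    then obtain u v where "u \<in> B w" "v \<in> B w'" "{u, v} \<in> E'" using B3 by blast
    then show "\<exists>u\<in>h ` B w. \<exists>v\<in>h ` B w'. {u, v} \<in> E"
      using B1 w assms(4) by blast
  qed
qed

lemma has_K5_minor_iso:
  assumes "graph_iso V E W F" and "has_K5_minor W F"
  shows "has_K5_minor V E"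
proof -
  obtain f where f: "bij_betw f V W" "\<forall>u\<in>V. \<forall>v\<in>V. {u, v} \<in> E \<longleftrightarrow> {f u, f v} \<in> F"
    using assms(1) unfolding graph_iso_def by blast
  have W: "W = f ` V" using f(1) unfolding bij_betw_def by simp
  define h where "h = inv_into V f"
  have h: "h y \<in> V" "f (h y) = y" if "y \<in> W" for y
    using that W unfolding h_def by (auto intro: inv_into_into f_inv_into_f)
  show ?thesis
    using assms(2) unfolding has_K5_minor_def
  proof (rule is_minor_embedding)
    show "inj_on h W" unfolding h_def W by (rule inj_on_inv_into) simp
    show "h ` W \<subseteq> V" using h by blast
    show "{h x, h y} \<in> E" if "x \<in> W" "y \<in> W" "{x, y} \<in> F" for x y
      using f(2) h that by metis
  qed
qed

lemma iso_C5_iso: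
  assumes "graph_iso V E W F" and "iso_C5 W F"
  shows "iso_C5 V E"
  using assms graph_iso_trans unfolding iso_C5_def by blast

lemma dyn4_colorable_iso:
  assumes "simple_graph V E" and "simple_graph W F" and "graph_iso V E W F"
    and "dyn4_colorable W F"
  shows "dyn4_colorable V E"
proof -
  obtain f where f: "bij_betw f V W" "\<forall>u\<in>V. \<forall>v\<in>V. {u, v} \<in> E \<longleftrightarrow> {f u, f v} \<in> F"
    using assms(3) unfolding graph_iso_def by blast
  have W: "W = f ` V" and inj: "inj_on f V" using f(1) unfolding bij_betw_def by auto
  obtain c where c: "dynamic_4_coloring W F c"
    using assms(4) unfolding dyn4_colorable_def by blast
  have nb: "neighbors F (f v) = f ` neighbors E v" if v: "v \<in> V" for v
  proof
    show "neighbors F (f v) \<subseteq> f ` neighbors E v"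
    proof
      fix u' assume u': "u' \<in> neighbors F (f v)"
      then obtain u where "u \<in> V" "u' = f u"
        using neighbors_subset[OF assms(2)] W by blast
      with u' f(2) v show "u' \<in> f ` neighbors E v" unfolding neighbors_def by blast
    qed
    show "f ` neighbors E v \<subseteq> neighbors F (f v)"
      using neighbors_subset[OF assms(1), of v] f(2) v unfolding neighbors_def by blast
  qed
  have card_nb: "card (neighbors F (f v)) = card (neighbors E v)" if "v \<in> V" for v
    unfolding nb[OF that]
    by (rule card_image) (rule inj_on_subset[OF inj neighbors_subset[OF assms(1)]])
  have fV: "f v \<in> W" if "v \<in> V" for v using W that by blast
  have "dynamic_4_coloring V E (c \<circ> f)"
    unfolding dynamic_4_coloring_def
  proof (intro conjI ballI impI)
    fix v assume "v \<in> V"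
    then show "(c \<circ> f) v < 4" using c fV unfolding dynamic_4_coloring_def by simp
  next
    fix u v assume "u \<in> V" "v \<in> V" "{u, v} \<in> E"
    then show "(c \<circ> f) u \<noteq> (c \<circ> f) v" using c fV f(2) unfolding dynamic_4_coloring_def by simp
  next
    fix v assume v: "v \<in> V"
    then have "card (neighbors F (f v)) \<le> 1 \<or>
        (\<exists>u\<in>neighbors F (f v). \<exists>w\<in>neighbors F (f v). c u \<noteq> c w)"
      using c fV unfolding dynamic_4_coloring_def by blast
    then show "card (neighbors E v) \<le> 1 \<or>
        (\<exists>u\<in>neighbors E v. \<exists>w\<in>neighbors E v. (c \<circ> f) u \<noteq> (c \<circ> f) w)"
      using card_nb[OF v] by (auto simp: nb[OF v])
  qed
  then show ?thesis unfolding dyn4_colorable_def by blast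
qed

lemma simple_graph_nat_copy:
  assumes "simple_graph V E"
  obtains V' :: "nat set" and E' where "simple_graph V' E'" and "card E' = card E"
    and "graph_iso V E V' E'"
proof -
  have "finite V" using assms unfolding simple_graph_def by blast
  then obtain g :: "'a \<Rightarrow> nat" where inj: "inj_on g V"
    using finite_imp_inj_to_nat_seg by blast
  define E' where "E' = image g ` E"
  have sub: "e \<subseteq> V" if "e \<in> E" for e using simple_graph_edge_subset[OF assms that] .
  have edge_iff: "{g a, g b} \<in> E' \<longleftrightarrow> {a, b} \<in> E" if "a \<in> V" "b \<in> V" for a b
  proof -
    have "{g a, g b} = g ` e \<longleftrightarrow> e = {a, b}" if "e \<in> E" for e
      using inj_on_image_eq_iff[OF inj sub[OF that], of "{a, b}"] \<open>a \<in> V\<close> \<open>b \<in> V\<close> by auto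
    then show ?thesis unfolding E'_def image_iff by blast
  qed
  have "simple_graph (g ` V) E'"
    unfolding simple_graph_def
  proof (intro conjI ballI)
    show "finite (g ` V)" using \<open>finite V\<close> by simp
    fix e' assume "e' \<in> E'"
    then obtain e where "e \<in> E" "e' = g ` e" unfolding E'_def by blast
    moreover obtain a b where "e = {a, b}" "a \<in> V" "b \<in> V" "a \<noteq> b"
      using assms \<open>e \<in> E\<close> unfolding simple_graph_def by blast
    ultimately have "e' = {g a, g b}" "g a \<noteq> g b" "a \<in> V" "b \<in> V"
      using inj_on_contraD[OF inj] by auto
    then show "\<exists>u v. e' = {u, v} \<and> u \<in> g ` V \<and> v \<in> g ` V \<and> u \<noteq> v" by blast
  qed
  moreover have "card E' = card E"
    unfolding E'_def by (rule card_image) (use inj_on_subset[OF inj_on_image_Pow[OF inj]] sub in blast)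
  moreover have "graph_iso V E (g ` V) E'"
    unfolding graph_iso_def using inj_on_imp_bij_betw[OF inj] edge_iff by blast
  ultimately show ?thesis by (rule that)
qed

text \<open>The minimality hypothesis only speaks about graphs on \<open>nat\<close>;
  \<open>dyn4_colorableI_below\<close> transports it to graphs on any vertex type.\<close>
definition dyn4_colorable_below :: "nat \<Rightarrow> bool" where
  "dyn4_colorable_below n \<longleftrightarrow> (\<forall>(V :: nat set) E.
     simple_graph V E \<and> connected_graph V E \<and> \<not> has_K5_minor V E \<and>
     \<not> iso_C5 V E \<and> card E < n \<longrightarrow> dyn4_colorable V E)"

lemma dyn4_colorableI_below:
  assumes "dyn4_colorable_below n" and "card E < n"
    and "simple_graph V E" and "connected_graph V E"
    and "\<not> has_K5_minor V E" and "\<not> iso_C5 V E"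
  shows "dyn4_colorable V E"
proof -
  obtain V' :: "nat set" and E' where copy: "simple_graph V' E'" "card E' = card E"
    "graph_iso V E V' E'"
    using simple_graph_nat_copy[OF assms(3)] .
  have "connected_graph V' E'" using connected_graph_iso copy(3) assms(4) .
  moreover have "\<not> has_K5_minor V' E'" using has_K5_minor_iso copy(3) assms(5) by blast
  moreover have "\<not> iso_C5 V' E'" using iso_C5_iso copy(3) assms(6) by blast
  ultimately have "dyn4_colorable V' E'"
    using assms(1,2) copy(1,2) unfolding dyn4_colorable_below_def by simp
  then show ?thesis using dyn4_colorable_iso assms(3) copy by blast
qed

text \<open>Only the vertices of \<open>S\<close> must be happy: for a side of a cut vertex \<open>x\<close>, the happiness
  of \<open>x\<close> is only arranged when the two sides are glued.\<close>
definition dyn4_coloring_on :: "'a set set \<Rightarrow> 'a set \<Rightarrow> 'a set \<Rightarrow> ('a \<Rightarrow> nat) \<Rightarrow> bool" where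
  "dyn4_coloring_on E T S c \<longleftrightarrow>
     (\<forall>v\<in>T. c v < 4) \<and>
     (\<forall>u\<in>T. \<forall>v\<in>T. {u, v} \<in> E \<longrightarrow> c u \<noteq> c v) \<and>
     (\<forall>v\<in>S. card (neighbors E v) \<le> 1 \<or>
        (\<exists>u\<in>neighbors E v. \<exists>w\<in>neighbors E v. c u \<noteq> c w))"

lemma dynamic_4_coloring_iff_on: "dynamic_4_coloring V E c \<longleftrightarrow> dyn4_coloring_on E V V c"
  unfolding dynamic_4_coloring_def dyn4_coloring_on_def ..

lemma dyn4_coloring_on_permute:
  assumes "dyn4_coloring_on E T S c" and "inj \<pi>" and "\<forall>n<4. \<pi> n < 4"
  shows "dyn4_coloring_on E T S (\<pi> \<circ> c)"
  using assms unfolding dyn4_coloring_on_def by (simp add: inj_eq)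

lemma dyn4_coloring_on_subset:
  assumes "dyn4_coloring_on E T S c" and "S' \<subseteq> S"
  shows "dyn4_coloring_on E T S' c"
  using assms unfolding dyn4_coloring_on_def by (meson subsetD)

lemma dyn4_coloring_on_cong:
  assumes "dyn4_coloring_on E T S c'" and "\<And>v. v \<in> T \<Longrightarrow> c v = c' v"
    and "\<And>v. v \<in> S \<Longrightarrow> neighbors E v \<subseteq> T"
  shows "dyn4_coloring_on E T S c"
  unfolding dyn4_coloring_on_def
proof (intro conjI ballI impI)
  fix v assume "v \<in> T"
  then show "c v < 4" using assms(1,2) unfolding dyn4_coloring_on_def by simp
next
  fix u v assume "u \<in> T" "v \<in> T" "{u, v} \<in> E"
  then show "c u \<noteq> c v" using assms(1,2) unfolding dyn4_coloring_on_def by simp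
next
  fix v assume v: "v \<in> S"
  then have "card (neighbors E v) \<le> 1 \<or>
      (\<exists>u\<in>neighbors E v. \<exists>w\<in>neighbors E v. c' u \<noteq> c' w)"
    using assms(1) unfolding dyn4_coloring_on_def by blast
  moreover have "c u = c' u" if "u \<in> neighbors E v" for u
    using assms(2,3) v that by blast
  ultimately show "card (neighbors E v) \<le> 1 \<or>
      (\<exists>u\<in>neighbors E v. \<exists>w\<in>neighbors E v. c u \<noteq> c w)"
    by (metis (no_types, lifting))
qed

lemma exists_permutation_mapping_two:
  assumes "p \<in> K" "q \<in> K" "P \<in> K" "t \<in> K" "p \<noteq> q" "P \<noteq> t"
  shows "\<exists>\<pi>. inj \<pi> \<and> \<pi> ` K = K \<and> \<pi> p = P \<and> \<pi> q = t"
proof -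
  define q' where "q' = transpose p P q"
  define \<pi> where "\<pi> = transpose q' t \<circ> transpose p P"
  have "q' \<noteq> P"
    unfolding q'_def using assms(5) by (metis transpose_apply_first transpose_eq_imp_eq)
  then have "\<pi> p = P" "\<pi> q = t" unfolding \<pi>_def q'_def using assms(6) by auto
  moreover have "inj \<pi>" unfolding \<pi>_def by (simp add: inj_compose)
  moreover have "q' \<in> K" unfolding q'_def using assms(1-3) by (simp add: transpose_def)
  then have "\<pi> ` K = K" unfolding \<pi>_def image_comp[symmetric] using assms(1,3,4) by simp
  ultimately show ?thesis by blast
qed

text \<open>Vertex \<open>k\<close> gets colour 0 and both its neighbours colour 1; every other vertex of the
  cycle sees two distinct colours.\<close>
definition C5_coloring :: "nat \<Rightarrow> nat \<Rightarrow> nat" where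
  "C5_coloring k i = [0, 1, 2, 3, 1] ! ((i + 5 - k) mod 5)"

lemma less_5_cases: "(k::nat) < 5 \<Longrightarrow> k = 0 \<or> k = 1 \<or> k = 2 \<or> k = 3 \<or> k = 4"
  by arith

lemma C5_coloring_less_4: "C5_coloring k i < 4"
proof -
  have "(i + 5 - k) mod 5 < 5" by simp
  then show ?thesis unfolding C5_coloring_def by (drule_tac less_5_cases) (elim disjE; simp)
qed

lemma C5_coloring_proper: "k < 5 \<Longrightarrow> i < 5 \<Longrightarrow> C5_coloring k i \<noteq> C5_coloring k ((i + 1) mod 5)"
  by (drule less_5_cases)+ (elim disjE; simp add: C5_coloring_def)

lemma C5_coloring_happy:
  "k < 5 \<Longrightarrow> i < 5 \<Longrightarrow> i \<noteq> k \<Longrightarrow> C5_coloring k ((i + 1) mod 5) \<noteq> C5_coloring k ((i + 4) mod 5)"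
  by (drule less_5_cases)+ (elim disjE; simp add: C5_coloring_def)

lemma iso_C5_coloring_except:
  assumes "iso_C5 T F" and "x \<in> T"
  obtains c where "dyn4_coloring_on F T (T - {x}) c"
proof -
  obtain f where f: "bij_betw f T C5_verts"
      "\<forall>u\<in>T. \<forall>v\<in>T. {u, v} \<in> F \<longleftrightarrow> {f u, f v} \<in> C5_edges"
    using assms(1) unfolding iso_C5_def graph_iso_def by blast
  have fT: "f ` T = {0..<5}" and inj: "inj_on f T"
    using f(1) unfolding bij_betw_def C5_verts_def by auto
  define h where "h = inv_into T f"
  have h: "h j \<in> T" "f (h j) = j" if "j < 5" for j
    unfolding h_def using fT that by (auto intro: inv_into_into f_inv_into_f)
  have f_lt: "f v < 5" if "v \<in> T" for v using fT that by auto
  have k: "f x < 5" using f_lt assms(2) .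
  define c where "c v = C5_coloring (f x) (f v)" for v
  have "dyn4_coloring_on F T (T - {x}) c"
    unfolding dyn4_coloring_on_def
  proof (intro conjI ballI impI disjI2)
    fix v show "c v < 4" unfolding c_def by (rule C5_coloring_less_4)
  next
    fix u v assume "u \<in> T" "v \<in> T" "{u, v} \<in> F"
    then have "{f u, f v} \<in> C5_edges" using f(2) by blast
    then obtain i where i: "i < 5" "{f u, f v} = {i, (i + 1) mod 5}"
      unfolding C5_edges_def by blast
    then show "c u \<noteq> c v"
      unfolding c_def using C5_coloring_proper[OF k i(1)] by (auto simp: doubleton_eq_iff)
  next
    fix v assume v: "v \<in> T - {x}"
    have fv: "f v < 5" using v f_lt by simp
    have "f v \<noteq> f x" using v assms(2) inj by (metis DiffE inj_on_contraD singletonI)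
    define u where "u = h ((f v + 1) mod 5)"
    define w where "w = h ((f v + 4) mod 5)"
    have u: "u \<in> T" "f u = (f v + 1) mod 5" unfolding u_def using h by auto
    have w: "w \<in> T" "f w = (f v + 4) mod 5" unfolding w_def using h by auto
    have "{f u, f v} \<in> C5_edges"
      unfolding C5_edges_def u(2) using fv by (auto simp: insert_commute)
    then have "u \<in> neighbors F v" unfolding neighbors_def using f(2) u(1) v by blast
    moreover have "((f v + 4) mod 5 + 1) mod 5 = f v" using less_5_cases[OF fv] by auto
    then have "{f w, f v} \<in> C5_edges"
      unfolding C5_edges_def w(2) using fv by (auto intro!: exI[of _ "(f v + 4) mod 5"])
    then have "w \<in> neighbors F v" unfolding neighbors_def using f(2) w(1) v by blast
    moreover have "c u \<noteq> c w"
      unfolding c_def u(2) w(2) using C5_coloring_happy[OF k fv \<open>f v \<noteq> f x\<close>] .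
    ultimately show "\<exists>u\<in>neighbors F v. \<exists>w\<in>neighbors F v. c u \<noteq> c w" by blast
  qed
  then show ?thesis by (rule that)
qed

text \<open>\<open>S\<close> is a union of components of \<open>G - x\<close>.\<close>
definition attached_only_at :: "'a set set \<Rightarrow> 'a \<Rightarrow> 'a set \<Rightarrow> bool" where
  "attached_only_at E x S \<longleftrightarrow> (\<forall>y z. y \<in> S \<longrightarrow> {y, z} \<in> E \<longrightarrow> z \<noteq> x \<longrightarrow> z \<in> S)"

definition induced_edges :: "'a set set \<Rightarrow> 'a set \<Rightarrow> 'a set set" where
  "induced_edges E T = {e \<in> E. e \<subseteq> T}"

lemma neighbors_attached_only_at:
  assumes "attached_only_at E x S" and "v \<in> S"
  shows "neighbors E v \<subseteq> insert x S"
proof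
  fix u assume "u \<in> neighbors E v"
  then have "{v, u} \<in> E" by (simp add: neighbors_def insert_commute)
  then show "u \<in> insert x S" using assms unfolding attached_only_at_def by blast
qed

lemma attached_only_at_reaches:
  assumes "connected_graph V E" and "x \<in> V" and "S \<subseteq> V - {x}"
    and "attached_only_at E x S" and "w \<in> S"
  shows "(\<lambda>a b. a \<in> insert x S \<and> b \<in> insert x S \<and> {a, b} \<in> E)\<^sup>*\<^sup>* w x"
proof -
  let ?R = "\<lambda>a b. a \<in> insert x S \<and> b \<in> insert x S \<and> {a, b} \<in> E"
  have walk: "(\<lambda>a b. a \<in> V \<and> b \<in> V \<and> {a, b} \<in> E)\<^sup>*\<^sup>* w x"
    using assms(1,2,3,5) unfolding connected_graph_def connected_in_def by blast
  have "(t \<in> S \<and> ?R\<^sup>*\<^sup>* w t) \<or> ?R\<^sup>*\<^sup>* w x"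
    if "(\<lambda>a b. a \<in> V \<and> b \<in> V \<and> {a, b} \<in> E)\<^sup>*\<^sup>* w t" for t
    using that
  proof (induction rule: rtranclp_induct)
    case base
    then show ?case using assms(5) by simp
  next
    case (step y z)
    then consider "y \<in> S" "?R\<^sup>*\<^sup>* w y" | "?R\<^sup>*\<^sup>* w x" by blast
    then show ?case
    proof cases
      case 1
      have z: "z = x \<or> z \<in> S"
        using step(2) 1(1) assms(4) unfolding attached_only_at_def by blast
      then have "?R y z" using 1(1) step(2) by blast
      with 1(2) have "?R\<^sup>*\<^sup>* w z" by (rule rtranclp.rtrancl_into_rtrancl)
      with z show ?thesis by blast
    qed simp
  qed
  from this[OF walk] show ?thesis by blast
qed

lemma attached_only_at_neighbor:
  assumes "simple_graph V E" and "connected_graph V E" and "x \<in> V" and "S \<subseteq> V - {x}"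
    and "attached_only_at E x S" and "w \<in> S"
  obtains a where "a \<in> S" and "{a, x} \<in> E"
proof -
  have "w \<noteq> x" using assms(4,6) by blast
  with attached_only_at_reaches[OF assms(2-6)]
  obtain y where "y \<in> insert x S" "{y, x} \<in> E"
    by (cases rule: rtranclp.cases) auto
  moreover have "y \<noteq> x" using simple_graph_edgeD(1)[OF assms(1) \<open>{y, x} \<in> E\<close>] .
  ultimately show ?thesis using that by blast
qed

lemma simple_graph_induced:
  assumes "simple_graph V E" and "T \<subseteq> V"
  shows "simple_graph T (induced_edges E T)"
  unfolding simple_graph_def
proof (intro conjI ballI)
  show "finite T" using assms finite_subset unfolding simple_graph_def by blast
  fix e assume "e \<in> induced_edges E T"
  then have "e \<in> E" "e \<subseteq> T" unfolding induced_edges_def by auto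
  moreover obtain u v where "e = {u, v}" "u \<noteq> v"
    using assms(1) \<open>e \<in> E\<close> unfolding simple_graph_def by blast
  ultimately show "\<exists>u v. e = {u, v} \<and> u \<in> T \<and> v \<in> T \<and> u \<noteq> v" by blast
qed

lemma has_K5_minor_induced:
  assumes "T \<subseteq> V" and "has_K5_minor T (induced_edges E T)"
  shows "has_K5_minor V E"
  using assms(2) unfolding has_K5_minor_def
  by (rule is_minor_embedding[where h = id]) (use assms(1) in \<open>auto simp: induced_edges_def\<close>)

lemma connected_graph_attached_side:
  assumes "connected_graph V E" and "x \<in> V" and "S \<subseteq> V - {x}" and "attached_only_at E x S"
  shows "connected_graph (insert x S) (induced_edges E (insert x S))"
  unfolding connected_graph_def connected_in_def
proof (intro conjI ballI)
  let ?R = "\<lambda>a b. a \<in> insert x S \<and> b \<in> insert x S \<and> {a, b} \<in> induced_edges E (insert x S)"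
  have R: "?R = (\<lambda>a b. a \<in> insert x S \<and> b \<in> insert x S \<and> {a, b} \<in> E)"
    unfolding induced_edges_def by (intro ext) auto
  have to_x: "?R\<^sup>*\<^sup>* a x" if "a \<in> insert x S" for a
  proof (cases "a = x")
    case False
    then show ?thesis using that attached_only_at_reaches[OF assms, of a] unfolding R by simp
  qed simp
  have "symp ?R" by (rule sympI) (simp add: insert_commute)
  then have from_x: "?R\<^sup>*\<^sup>* x a" if "a \<in> insert x S" for a
    by (rule sympD[OF symp_rtranclp to_x[OF that]])
  fix a b assume "a \<in> insert x S" and "b \<in> insert x S"
  then show "?R\<^sup>*\<^sup>* a b" by (rule rtranclp_trans[OF to_x from_x])
qed simp

lemma dyn4_coloring_on_induced:
  assumes "attached_only_at E x S"
    and "dyn4_coloring_on (induced_edges E (insert x S)) (insert x S) S c"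
  shows "dyn4_coloring_on E (insert x S) S c"
proof -
  have nb: "neighbors (induced_edges E (insert x S)) v = neighbors E v" if "v \<in> S" for v
    using neighbors_attached_only_at[OF assms(1) that] that
    unfolding neighbors_def induced_edges_def by auto
  have "{u, v} \<in> induced_edges E (insert x S)"
    if "u \<in> insert x S" "v \<in> insert x S" "{u, v} \<in> E" for u v
    using that unfolding induced_edges_def by simp
  with assms(2) nb show ?thesis unfolding dyn4_coloring_on_def by metis
qed

lemma attached_side_coloring:
  assumes "simple_graph V E" and "connected_graph V E" and "\<not> has_K5_minor V E"
    and "dyn4_colorable_below (card E)"
    and "x \<in> V" and "S \<subseteq> V - {x}" and "attached_only_at E x S"
    and "e \<in> E" and "\<not> e \<subseteq> insert x S"
  obtains c where "dyn4_coloring_on E (insert x S) S c"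
proof -
  let ?T = "insert x S" and ?F = "induced_edges E (insert x S)"
  have T: "?T \<subseteq> V" using assms(5,6) by blast
  have "\<exists>c. dyn4_coloring_on ?F ?T S c"
  proof (cases "iso_C5 ?T ?F")
    case True
    obtain c where "dyn4_coloring_on ?F ?T (?T - {x}) c"
      by (rule iso_C5_coloring_except[OF True insertI1])
    moreover have "S \<subseteq> ?T - {x}" using assms(6) by blast
    ultimately show ?thesis by (blast intro: dyn4_coloring_on_subset)
  next
    case False
    have "?F \<subset> E" using assms(8,9) unfolding induced_edges_def by blast
    then have "card ?F < card E"
      by (rule psubset_card_mono[OF simple_graph_finite_edges[OF assms(1)]])
    moreover have "\<not> has_K5_minor ?T ?F" using has_K5_minor_induced[OF T] assms(3) by blast
    ultimately have "dyn4_colorable ?T ?F"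
      using dyn4_colorableI_below[OF assms(4) _ simple_graph_induced[OF assms(1) T]
        connected_graph_attached_side[OF assms(2,5,6,7)] _ False] by blast
    then obtain c where "dyn4_coloring_on ?F ?T ?T c"
      unfolding dyn4_colorable_def dynamic_4_coloring_iff_on by blast
    then have "dyn4_coloring_on ?F ?T S c" by (rule dyn4_coloring_on_subset) blast
    then show ?thesis by blast
  qed
  then show ?thesis using dyn4_coloring_on_induced[OF assms(7)] that by blast
qed

lemma cut_vertex_split:
  assumes "simple_graph V E" and "V - {x} \<noteq> {}"
    and "\<not> connected_graph (V - {x}) {e \<in> E. x \<notin> e}"
  obtains C D where "V - {x} = C \<union> D" and "C \<inter> D = {}" and "C \<noteq> {}" and "D \<noteq> {}"
    and "attached_only_at E x C" and "attached_only_at E x D"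
proof -
  let ?R = "\<lambda>a b. a \<in> V - {x} \<and> b \<in> V - {x} \<and> {a, b} \<in> {e \<in> E. x \<notin> e}"
  obtain u v where uv: "u \<in> V - {x}" "v \<in> V - {x}" "\<not> ?R\<^sup>*\<^sup>* u v"
    using assms(2,3) unfolding connected_graph_def connected_in_def by blast
  define C where "C = {w \<in> V - {x}. ?R\<^sup>*\<^sup>* u w}"
  define D where "D = V - {x} - C"
  have closed: "z \<in> C" if "y \<in> C" "{y, z} \<in> E" "z \<noteq> x" for y z
  proof -
    have "z \<in> V" using simple_graph_edgeD(3)[OF assms(1) that(2)] .
    with that have "?R\<^sup>*\<^sup>* u y" "?R y z" unfolding C_def by auto
    then have "?R\<^sup>*\<^sup>* u z" by (rule rtranclp.rtrancl_into_rtrancl)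
    with \<open>z \<in> V\<close> \<open>z \<noteq> x\<close> show ?thesis unfolding C_def by blast
  qed
  have "attached_only_at E x C" unfolding attached_only_at_def using closed by blast
  moreover have "z \<in> D" if "y \<in> D" "{y, z} \<in> E" "z \<noteq> x" for y z
  proof (rule ccontr)
    assume "z \<notin> D"
    with that simple_graph_edgeD(3)[OF assms(1) that(2)] have "z \<in> C" unfolding D_def by blast
    moreover have "{z, y} \<in> E" using that(2) by (simp add: insert_commute)
    ultimately show False using closed that(1) unfolding D_def by blast
  qed
  then have "attached_only_at E x D" unfolding attached_only_at_def by blast
  moreover have "u \<in> C" "v \<in> D" unfolding D_def C_def using uv by auto
  moreover have "V - {x} = C \<union> D" "C \<inter> D = {}" unfolding D_def C_def by auto
  ultimately show ?thesis using that by blast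
qed

lemma not_two_connected_split:
  assumes "simple_graph V E" and "connected_graph V E" and "\<not> card V \<le> 2"
    and "\<not> two_connected V E"
  obtains x C D where "x \<in> V" and "V - {x} = C \<union> D" and "C \<inter> D = {}"
    and "C \<noteq> {}" and "D \<noteq> {}" and "attached_only_at E x C" and "attached_only_at E x D"
proof -
  obtain x where x: "x \<in> V" and cut: "\<not> connected_graph (V - {x}) {e \<in> E. x \<notin> e}"
    using assms(2-4) unfolding two_connected_def del_vertex_def by auto
  have "card (V - {x}) \<noteq> 0" using assms(3) x by (simp add: card_Diff_singleton_if)
  then have "V - {x} \<noteq> {}" by (metis card.empty)
  then show ?thesis by (rule cut_vertex_split[OF assms(1) _ cut]) (rule that[OF x])
qed

lemma edge_within_side:
  assumes "V - {x} = C \<union> D" and "attached_only_at E x C" and "attached_only_at E x D"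
    and "u \<in> V" and "v \<in> V" and "{u, v} \<in> E"
  shows "(u \<in> insert x C \<and> v \<in> insert x C) \<or> (u \<in> insert x D \<and> v \<in> insert x D)"
proof -
  consider "u = x" | "u \<in> C" | "u \<in> D" using assms(1,4) by auto
  then show ?thesis
  proof cases
    case 1
    then show ?thesis using assms(1,5) by auto
  next
    case 2
    then have "v = x \<or> v \<in> C" using assms(2,6) unfolding attached_only_at_def by blast
    then show ?thesis using 2 by blast
  next
    case 3
    then have "v = x \<or> v \<in> D" using assms(3,6) unfolding attached_only_at_def by blast
    then show ?thesis using 3 by blast
  qed
qed

lemma glue_agreeing_colorings:
  assumes "V - {x} = C \<union> D" and "C \<inter> D = {}" and "x \<in> V"
    and "attached_only_at E x C" and "attached_only_at E x D"
    and "a \<in> C" and "{a, x} \<in> E" and "b \<in> D" and "{b, x} \<in> E"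
    and c1: "dyn4_coloring_on E (insert x C) C c1"
    and c2: "dyn4_coloring_on E (insert x D) D c2"
    and "c1 x = c2 x" and "c1 a \<noteq> c2 b"
  shows "dyn4_colorable V E"
proof -
  define c where "c w = (if w \<in> insert x C then c1 w else c2 w)" for w
  have on_C: "c w = c1 w" if "w \<in> insert x C" for w using that c_def by simp
  have on_D: "c w = c2 w" if "w \<in> insert x D" for w
    using that assms(1,2,12) unfolding c_def by auto
  have V: "V = insert x C \<union> insert x D" using assms(1,3) by auto
  have coloring_C: "dyn4_coloring_on E (insert x C) C c"
    using dyn4_coloring_on_cong[OF c1 on_C] neighbors_attached_only_at[OF assms(4)] by blast
  have coloring_D: "dyn4_coloring_on E (insert x D) D c"
    using dyn4_coloring_on_cong[OF c2 on_D] neighbors_attached_only_at[OF assms(5)] by blast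
  have "dyn4_coloring_on E V V c"
    unfolding dyn4_coloring_on_def
  proof (intro conjI ballI impI)
    fix w assume "w \<in> V"
    then show "c w < 4" using V coloring_C coloring_D unfolding dyn4_coloring_on_def by blast
  next
    fix u v assume uv: "u \<in> V" "v \<in> V" "{u, v} \<in> E"
    then show "c u \<noteq> c v"
      using edge_within_side[OF assms(1,4,5) uv] coloring_C coloring_D unfolding dyn4_coloring_on_def by blast
  next
    fix w assume "w \<in> V"
    then consider "w = x" | "w \<in> C" | "w \<in> D" using assms(1) by auto
    then show "card (neighbors E w) \<le> 1 \<or> (\<exists>u\<in>neighbors E w. \<exists>v\<in>neighbors E w. c u \<noteq> c v)"
    proof cases
      case 1
      have "a \<in> neighbors E w" "b \<in> neighbors E w" using assms(7,9) 1 unfolding neighbors_def by auto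
      moreover have "c a \<noteq> c b" using on_C[of a] on_D[of b] assms(6,8,13) by simp
      ultimately show ?thesis by blast
    next
      case 2
      then show ?thesis using coloring_C unfolding dyn4_coloring_on_def by blast
    next
      case 3
      then show ?thesis using coloring_D unfolding dyn4_coloring_on_def by blast
    qed
  qed
  then show ?thesis unfolding dyn4_colorable_def dynamic_4_coloring_iff_on by blast
qed

lemma glue_side_colorings:
  assumes "V - {x} = C \<union> D" and "C \<inter> D = {}" and "x \<in> V"
    and "attached_only_at E x C" and "attached_only_at E x D"
    and "a \<in> C" and "{a, x} \<in> E" and "b \<in> D" and "{b, x} \<in> E"
    and c1: "dyn4_coloring_on E (insert x C) C c1"
    and c2: "dyn4_coloring_on E (insert x D) D c2"
  shows "dyn4_colorable V E"
proof -
  have "c1 x < 4" "c1 a < 4" "c2 x < 4" "c2 b < 4"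
    using c1 c2 assms(6,8) unfolding dyn4_coloring_on_def by auto
  moreover have "c2 x \<noteq> c2 b" using c2 assms(8,9) unfolding dyn4_coloring_on_def by auto
  moreover obtain t :: nat where t: "t < 4" "t \<noteq> c1 x" "t \<noteq> c1 a"
    using that[of "if c1 x \<noteq> 0 \<and> c1 a \<noteq> 0 then 0 else if c1 x \<noteq> 1 \<and> c1 a \<noteq> 1 then 1 else 2"]
    by (auto split: if_splits)
  ultimately obtain \<pi> where \<pi>: "inj \<pi>" "\<pi> ` {..<4} = {..<4}" "\<pi> (c2 x) = c1 x" "\<pi> (c2 b) = t"
    using exists_permutation_mapping_two[of "c2 x" "{..<4}" "c2 b" "c1 x" t] by auto
  then have "dyn4_coloring_on E (insert x D) D (\<pi> \<circ> c2)"
    using dyn4_coloring_on_permute[OF c2] by blast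
  then show ?thesis
    using glue_agreeing_colorings[OF assms(1-9) c1] \<pi>(3,4) t(3) by simp
qed

lemma dyn4_colorable_if_card_le_2:
  assumes "simple_graph V E" and "V \<noteq> {}" and "card V \<le> 2"
  shows "dyn4_colorable V E"
proof -
  obtain x0 where x0: "x0 \<in> V" using assms(2) by blast
  have fin: "finite V" using assms(1) unfolding simple_graph_def by blast
  define c :: "'a \<Rightarrow> nat" where "c w = (if w = x0 then 0 else 1)" for w
  have "dynamic_4_coloring V E c"
    unfolding dynamic_4_coloring_def
  proof (intro conjI ballI impI)
    fix v show "c v < 4" unfolding c_def by simp
  next
    fix u v assume uv: "u \<in> V" "v \<in> V" "{u, v} \<in> E"
    have "u \<noteq> v" using simple_graph_edgeD(1)[OF assms(1) uv(3)] .
    show "c u \<noteq> c v"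
    proof
      assume "c u = c v"
      then have "u \<noteq> x0" "v \<noteq> x0" using \<open>u \<noteq> v\<close> unfolding c_def by (auto split: if_splits)
      then have "card {u, v, x0} = 3" using \<open>u \<noteq> v\<close> by simp
      moreover have "card {u, v, x0} \<le> card V" using uv x0 fin by (intro card_mono) auto
      ultimately show False using assms(3) by simp
    qed
  next
    fix v assume v: "v \<in> V"
    have "neighbors E v \<subseteq> V - {v}"
      unfolding neighbors_def using simple_graph_edgeD[OF assms(1)] by blast
    then have "card (neighbors E v) \<le> card (V - {v})" using fin by (intro card_mono) auto
    also have "\<dots> \<le> 1" using v fin assms(3) by simp
    finally show "card (neighbors E v) \<le> 1 \<or>
        (\<exists>u\<in>neighbors E v. \<exists>w\<in>neighbors E v. c u \<noteq> c w)" by simp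
  qed
  then show ?thesis unfolding dyn4_colorable_def by blast
qed

theorem lemma2p1:
  fixes V :: "'a set" and E :: "'a set set"
  assumes "simple_graph V E"
    and "connected_graph V E"
    and "\<not> has_K5_minor V E"
    and "\<not> iso_C5 V E"
    and "\<not> dyn4_colorable V E"
    and "\<forall>(V' :: nat set) (E' :: nat set set).
           simple_graph V' E' \<and> connected_graph V' E' \<and> \<not> has_K5_minor V' E' \<and>
           \<not> iso_C5 V' E' \<and> card E' < card E \<longrightarrow> dyn4_colorable V' E'"
  shows "two_connected V E"
proof (rule ccontr)
  assume "\<not> two_connected V E"
  have below: "dyn4_colorable_below (card E)"
    using assms(6) unfolding dyn4_colorable_below_def by blast
  have "V \<noteq> {}" using assms(2) unfolding connected_graph_def connected_in_def by blast
  then have "\<not> card V \<le> 2" using dyn4_colorable_if_card_le_2[OF assms(1)] assms(5) by blast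
  then obtain x C D where x: "x \<in> V" and split: "V - {x} = C \<union> D" "C \<inter> D = {}"
    and "C \<noteq> {}" "D \<noteq> {}" and att: "attached_only_at E x C" "attached_only_at E x D"
    by (rule not_two_connected_split[OF assms(1,2) _ \<open>\<not> two_connected V E\<close>])
  then obtain u v where "u \<in> C" "v \<in> D" by blast
  have sides: "C \<subseteq> V - {x}" "D \<subseteq> V - {x}" using split(1) by auto
  obtain a where a: "a \<in> C" "{a, x} \<in> E"
    by (rule attached_only_at_neighbor[OF assms(1,2) x sides(1) att(1) \<open>u \<in> C\<close>])
  obtain b where b: "b \<in> D" "{b, x} \<in> E"
    by (rule attached_only_at_neighbor[OF assms(1,2) x sides(2) att(2) \<open>v \<in> D\<close>])
  have "\<not> {b, x} \<subseteq> insert x C" "\<not> {a, x} \<subseteq> insert x D"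
    using a(1) b(1) sides split(2) by auto
  obtain c1 where "dyn4_coloring_on E (insert x C) C c1"
    by (rule attached_side_coloring[OF assms(1-3) below x sides(1) att(1) b(2) \<open>\<not> {b, x} \<subseteq> _\<close>])
  moreover obtain c2 where "dyn4_coloring_on E (insert x D) D c2"
    by (rule attached_side_coloring[OF assms(1-3) below x sides(2) att(2) a(2) \<open>\<not> {a, x} \<subseteq> _\<close>])
  ultimately have "dyn4_colorable V E" by (rule glue_side_colorings[OF split x att a b])
  with assms(5) show False ..
qed

end
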